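(* Let $S$ be a real skew-symmetric $d\times d$ matrix (not necessarily invertible), let $\mathcal H$ be a Hilbert space on which $\mathrm{CCR}(S)$ with canonical observables $X_1,\dots,X_d$ is represented, let $\psi\in\mathcal H$ be a cyclic unit vector for $\mathrm{CCR}(S)$, put $\psi(\xi):=e^{\sqrt{-1}\xi^iX_i}\psi$ for $\xi\in\mathbb R^d$, and for a bounded operator $A$ on $\mathcal H$ put $\varphi_A(\xi;\eta):=\langle\psi(\xi),A\psi(\eta)\rangle$. Let $D$ be a dense subset of $\mathbb R^d$ and let $\varphi:D\times D\to\mathbb C$ satisfy $0\prec\varphi\prec\varphi_I$ (with $\varphi_I$ restricted to $D\times D$). Then there exists a unique bounded operator $A$ on $\mathcal H$ with $0\le A\le I$ and $\varphi=\varphi_A$ on $D\times D$. Consequently, $\varphi$ extends continuously to $\mathbb R^d\times\mathbb R^d$.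
   Context: $\mathrm{CCR}(S)$ is the von Neumann algebra generated by unitaries $e^{\sqrt{-1}\xi^iX_i}$ satisfying $e^{\sqrt{-1}\xi^iX_i}e^{\sqrt{-1}\eta^jX_j}=e^{\sqrt{-1}\xi^\top S\eta}e^{\sqrt{-1}(\xi+\eta)^iX_i}$ (summation convention). A function $\varphi:D\times D\to\mathbb C$ is positive semidefinite, written $\varphi\succ0$, if for all $r\in\mathbb N$ and $\xi^{(1)},\dots,\xi^{(r)}\in D$ the matrix $[\varphi(\xi^{(i)};\xi^{(j)})]_{i,j}$ is positive semidefinite; $\varphi_1\succ\varphi_2$ means $\varphi_1-\varphi_2\succ0$, and $\varphi_1\prec\varphi_2$ means $\varphi_2\succ\varphi_1$. *)

theory Defs
  imports "HOL-Analysis.Analysis"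
begin

class complex_vector = real_vector +
  fixes scaleC :: "complex \<Rightarrow> 'a \<Rightarrow> 'a"
  assumes scaleC_add_right: "scaleC a (x + y) = scaleC a x + scaleC a y"
    and scaleC_add_left: "scaleC (a + b) x = scaleC a x + scaleC b x"
    and scaleC_scaleC: "scaleC a (scaleC b x) = scaleC (a * b) x"
    and scaleC_one: "scaleC 1 x = x"
    and scaleR_scaleC: "scaleR r x = scaleC (complex_of_real r) x"

text \<open>Inner product: conjugate-linear in the first, linear in the second argument.\<close>
class complex_inner = complex_vector + real_normed_vector +
  fixes cinner :: "'a \<Rightarrow> 'a \<Rightarrow> complex"
  assumes cinner_commute: "cinner x y = cnj (cinner y x)"
    and cinner_add_right: "cinner x (y + z) = cinner x y + cinner x z"
    and cinner_scaleC_right: "cinner x (scaleC c y) = c * cinner x y"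
    and cinner_ge_zero: "0 \<le> Re (cinner x x)"
    and cinner_eq_zero_iff: "cinner x x = 0 \<longleftrightarrow> x = 0"
    and norm_eq_sqrt_cinner: "norm x = sqrt (Re (cinner x x))"

class chilbert_space = complex_inner + complete_space

definition clinear :: "('a::complex_vector \<Rightarrow> 'b::complex_vector) \<Rightarrow> bool" where
  "clinear f \<longleftrightarrow> (\<forall>x y. f (x + y) = f x + f y) \<and> (\<forall>c x. f (scaleC c x) = scaleC c (f x))"

definition bounded_clinear :: "('a::{complex_vector,real_normed_vector} \<Rightarrow> 'b::{complex_vector,real_normed_vector}) \<Rightarrow> bool" where
  "bounded_clinear f \<longleftrightarrow> clinear f \<and> (\<exists>K. \<forall>x. norm (f x) \<le> norm x * K)"

definition unitary_op :: "('a::complex_inner \<Rightarrow> 'a) \<Rightarrow> bool" where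
  "unitary_op U \<longleftrightarrow> bounded_clinear U \<and> surj U \<and> (\<forall>x y. cinner (U x) (U y) = cinner x y)"

definition cnonneg :: "complex \<Rightarrow> bool" where
  "cnonneg z \<longleftrightarrow> Im z = 0 \<and> 0 \<le> Re z"

definition positive_op :: "('a::complex_inner \<Rightarrow> 'a) \<Rightarrow> bool" where
  "positive_op A \<longleftrightarrow> (\<forall>x. cnonneg (cinner x (A x)))"

definition commutant :: "('a::complex_inner \<Rightarrow> 'a) set \<Rightarrow> ('a \<Rightarrow> 'a) set" where
  "commutant T = {B. bounded_clinear B \<and> (\<forall>C\<in>T. B \<circ> C = C \<circ> B)}"

text \<open>A (regular) representation of CCR(S) on the Hilbert space:
  \<open>W \<xi>\<close> stands for \<open>e^{\<i>\<xi>^i X_i}\<close>.\<close>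
definition ccr_rep :: "real^'d^'d \<Rightarrow> (real^'d \<Rightarrow> 'h::chilbert_space \<Rightarrow> 'h) \<Rightarrow> bool" where
  "ccr_rep S W \<longleftrightarrow>
     (\<forall>\<xi>. unitary_op (W \<xi>)) \<and>
     (\<forall>\<xi> \<eta>. W \<xi> \<circ> W \<eta> = (\<lambda>x. scaleC (exp (\<i> * complex_of_real (\<xi> \<bullet> (S *v \<eta>)))) (W (\<xi> + \<eta>) x))) \<and>
     (\<forall>x. continuous_on UNIV (\<lambda>\<xi>. W \<xi> x))"

definition CCR_alg :: "(real^'d \<Rightarrow> 'h::chilbert_space \<Rightarrow> 'h) \<Rightarrow> ('h \<Rightarrow> 'h) set" where
  "CCR_alg W = commutant (commutant (range W))"

definition cyclic_vec :: "('h::chilbert_space \<Rightarrow> 'h) set \<Rightarrow> 'h \<Rightarrow> bool" where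
  "cyclic_vec M \<psi> \<longleftrightarrow> closure {B \<psi> | B. B \<in> M} = UNIV"

definition phi_op :: "(real^'d \<Rightarrow> 'h::chilbert_space \<Rightarrow> 'h) \<Rightarrow> 'h \<Rightarrow> ('h \<Rightarrow> 'h) \<Rightarrow> real^'d \<Rightarrow> real^'d \<Rightarrow> complex" where
  "phi_op W \<psi> A \<xi> \<eta> = cinner (W \<xi> \<psi>) (A (W \<eta> \<psi>))"

definition psd_on :: "'a set \<Rightarrow> ('a \<Rightarrow> 'a \<Rightarrow> complex) \<Rightarrow> bool" where
  "psd_on D \<phi> \<longleftrightarrow> (\<forall>(r::nat) (x::nat \<Rightarrow> 'a) (c::nat \<Rightarrow> complex). (\<forall>i<r. x i \<in> D) \<longrightarrow>
      cnonneg (\<Sum>i<r. \<Sum>j<r. cnj (c i) * \<phi> (x i) (x j) * c j))"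

end

(*
  Put u \<xi> = W \<xi> \<psi>. On the span V of {u \<xi> | \<xi> \<in> D} the kernel \<phi> induces the form
  B (\<Sum> a\<^sub>\<xi> u \<xi>) (\<Sum> b\<^sub>\<eta> u \<eta>) = \<Sum> cnj a\<^sub>\<xi> \<phi> \<xi> \<eta> b\<^sub>\<eta>. Since 0 \<preceq> \<phi> \<preceq> \<phi>\<^sub>I, Cauchy--Schwarz for
  the positive kernel \<phi> gives |B v w| \<le> \<parallel>v\<parallel> \<parallel>w\<parallel>; in particular B does not depend on the chosen
  coefficients. The closure of V is invariant under every W \<xi> and its adjoint W (-\<xi>), so the
  orthogonal projection onto it lies in the commutant of the W \<xi>, hence commutes with CCR(S), and
  cyclicity of \<psi> makes V dense. The Riesz representation theorem then turns B into a bounded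
  operator A with B v w = \<langle>v, A w\<rangle>, and the two positivity assumptions become 0 \<le> A \<le> I
  by density. Uniqueness is density again, and \<phi> = \<phi>\<^sub>A extends continuously because
  \<xi> \<mapsto> W \<xi> \<psi> is continuous.
*)

theory Submission
  imports Defs
begin

section \<open>Complex inner product spaces\<close>

lemma linear_scaleC_right: "linear (scaleC a :: 'a::complex_vector \<Rightarrow> 'a)"
  by (rule linearI) (simp_all add: scaleC_add_right scaleR_scaleC scaleC_scaleC mult.commute)

lemma linear_scaleC_left: "linear (\<lambda>a. scaleC a x :: 'a::complex_vector)"
  by (rule linearI) (simp_all add: scaleC_add_left scaleR_scaleC scaleC_scaleC scaleR_conv_of_real)

lemmas scaleC_zero_left [simp] = linear_0[OF linear_scaleC_left]
  and scaleC_diff_right = linear_diff[OF linear_scaleC_right]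
  and scaleC_minus_left = linear_neg[OF linear_scaleC_left]
  and scaleC_sum_right = linear_sum[OF linear_scaleC_right]


lemma cinner_add_left: "cinner (x + y) z = cinner x z + cinner y z"
  by (metis cinner_add_right cinner_commute complex_cnj_add)

lemma cinner_scaleC_left: "cinner (scaleC c x) y = cnj c * cinner x y"
  by (metis cinner_scaleC_right cinner_commute complex_cnj_mult)

lemma cinner_self: "cinner x x = complex_of_real ((norm x)\<^sup>2)"
proof -
  have "Im (cinner x x) = Im (cnj (cinner x x))"
    using cinner_commute[of x x] by simp
  then show ?thesis
    using norm_eq_sqrt_cinner[of x] cinner_ge_zero[of x] by (simp add: complex_eq_iff)
qed

lemma Re_cinner_self: "Re (cinner x x) = (norm x)\<^sup>2"
  using norm_eq_sqrt_cinner[of x] cinner_ge_zero[of x] by simp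

lemma power2_norm_add_scaleC:
  "(norm (x + scaleC t y))\<^sup>2 = (norm x)\<^sup>2 + 2 * Re (t * cinner x y) + (cmod t)\<^sup>2 * (norm y)\<^sup>2"
proof -
  have "cinner (x + scaleC t y) (x + scaleC t y)
      = cinner x x + t * cinner x y + cnj (t * cinner x y) + (cnj t * t) * cinner y y"
    by (simp add: cinner_add_left cinner_add_right cinner_scaleC_left cinner_scaleC_right
        cinner_commute[of y x] algebra_simps)
  also have "cnj t * t = of_real ((cmod t)\<^sup>2)"
    by (metis complex_norm_square mult.commute)
  finally have "Re (cinner (x + scaleC t y) (x + scaleC t y))
      = Re (cinner x x) + 2 * Re (t * cinner x y) + (cmod t)\<^sup>2 * Re (cinner y y)"
    by simp
  then show ?thesis
    by (simp add: cinner_self)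
qed

lemma cmod_power2_le_if_quadratic_nonneg:
  fixes p q :: real and b :: complex
  assumes nonneg: "\<And>t. 0 \<le> p + 2 * Re (t * b) + (cmod t)\<^sup>2 * q" and "0 \<le> p" "0 \<le> q"
  shows "(cmod b)\<^sup>2 \<le> p * q"
proof (cases "q = 0")
  case False
  then have q: "q > 0" using assms by auto
  have Re_tb: "Re ((- cnj b / q) * b) = - ((cmod b)\<^sup>2 / q)"
    using cmod_power2[of b] by (simp add: power2_eq_square)
  have cmod_t: "(cmod (- cnj b / q))\<^sup>2 = (cmod b)\<^sup>2 / q\<^sup>2"
    by (simp add: norm_divide power_divide)
  have "0 \<le> p - 2 * (cmod b)\<^sup>2 / q + (cmod b)\<^sup>2 / q\<^sup>2 * q"
    using nonneg[of "- cnj b / q", unfolded Re_tb cmod_t] by simp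
  also have "(cmod b)\<^sup>2 / q\<^sup>2 * q = (cmod b)\<^sup>2 / q"
    using q by (simp add: power2_eq_square)
  finally show ?thesis
    using q by (simp add: divide_le_eq mult.commute)
next
  case True
  show ?thesis
  proof (rule ccontr)
    assume "\<not> ?thesis"
    then have b: "(cmod b)\<^sup>2 > 0" using True by simp
    define s where "s = (p + 1) / (2 * (cmod b)\<^sup>2)"
    have "Re ((- s * cnj b) * b) = - (s * (cmod b)\<^sup>2)"
      using cmod_power2[of b] by (simp add: power2_eq_square algebra_simps)
    then have "0 \<le> p - 2 * s * (cmod b)\<^sup>2"
      using nonneg[of "- s * cnj b"] True by simp
    also have "2 * s * (cmod b)\<^sup>2 = p + 1"
      using b by (simp add: s_def)
    finally show False by simp
  qed
qed

lemma cinner_Cauchy_Schwarz: "cmod (cinner x y) \<le> norm x * norm y"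
proof -
  have "(cmod (cinner x y))\<^sup>2 \<le> (norm x)\<^sup>2 * (norm y)\<^sup>2"
  proof (rule cmod_power2_le_if_quadratic_nonneg)
    show "0 \<le> (norm x)\<^sup>2 + 2 * Re (t * cinner x y) + (cmod t)\<^sup>2 * (norm y)\<^sup>2" for t
      using power2_norm_add_scaleC[of x t y] by (metis zero_le_power2)
  qed simp_all
  then have "(cmod (cinner x y))\<^sup>2 \<le> (norm x * norm y)\<^sup>2"
    by (simp add: power_mult_distrib)
  then show ?thesis
    by (rule power2_le_imp_le) simp
qed

lemma norm_scaleC: "norm (scaleC c x) = cmod c * norm (x::'a::complex_inner)"
proof -
  have "cinner (scaleC c x) (scaleC c x) = (cnj c * c) * cinner x x"
    by (simp add: cinner_scaleC_left cinner_scaleC_right)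
  also have "cnj c * c = of_real ((cmod c)\<^sup>2)"
    by (metis complex_norm_square mult.commute)
  finally have "(norm (scaleC c x))\<^sup>2 = (cmod c * norm x)\<^sup>2"
    by (simp only: cinner_self of_real_mult[symmetric] of_real_eq_iff power_mult_distrib)
  then show ?thesis
    by (rule power2_eq_imp_eq) simp_all
qed

lemma bounded_bilinear_cinner: "bounded_bilinear (cinner :: 'a::complex_inner \<Rightarrow> 'a \<Rightarrow> complex)"
proof
  show "\<exists>K. \<forall>a b. norm (cinner a b) \<le> norm a * norm b * K"
    using cinner_Cauchy_Schwarz by (metis mult.right_neutral)
qed (simp_all add: cinner_add_left cinner_add_right cinner_scaleC_left cinner_scaleC_right
      scaleR_scaleC scaleR_conv_of_real)

lemmas cinner_zero_left [simp] = bounded_bilinear.zero_left[OF bounded_bilinear_cinner]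
  and cinner_diff_left = bounded_bilinear.diff_left[OF bounded_bilinear_cinner]
  and cinner_diff_right = bounded_bilinear.diff_right[OF bounded_bilinear_cinner]
  and cinner_sum_left = bounded_bilinear.sum_left[OF bounded_bilinear_cinner]
  and cinner_sum_right = bounded_bilinear.sum_right[OF bounded_bilinear_cinner]
  and continuous_on_cinner = bounded_bilinear.continuous_on[OF bounded_bilinear_cinner]

lemma bounded_linear_scaleC_right: "bounded_linear (scaleC c :: 'a::complex_inner \<Rightarrow> 'a)"
  by (rule bounded_linear_intro[of _ "cmod c"])
    (simp_all add: scaleC_add_right scaleR_scaleC scaleC_scaleC mult.commute norm_scaleC)

lemmas continuous_on_scaleC = bounded_linear.continuous_on[OF bounded_linear_scaleC_right]

lemma parallelogram_law:
  "(norm (x + y))\<^sup>2 + (norm (x - y))\<^sup>2 = 2 * (norm x)\<^sup>2 + 2 * (norm (y::'a::complex_inner))\<^sup>2"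
  using power2_norm_add_scaleC[of x 1 y] power2_norm_add_scaleC[of x "-1" y]
  by (simp add: scaleC_one scaleC_minus_left)

lemma Pythagoras: "cinner x y = 0 \<Longrightarrow> (norm (x + y))\<^sup>2 = (norm x)\<^sup>2 + (norm y)\<^sup>2"
  using power2_norm_add_scaleC[of x 1 y] by (simp add: scaleC_one)

instantiation complex :: complex_inner
begin

definition scaleC_complex_def [simp]: "scaleC a (z::complex) = a * z"

definition cinner_complex_def [simp]: "cinner (x::complex) y = cnj x * y"

instance
proof
  fix x y z :: complex and a b :: complex and r :: real
  show "scaleC a (x + y) = scaleC a x + scaleC a y" by (simp add: algebra_simps)
  show "scaleC (a + b) x = scaleC a x + scaleC b x" by (simp add: algebra_simps)
  show "scaleC a (scaleC b x) = scaleC (a * b) x" by simp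
  show "scaleC 1 x = x" by simp
  show "scaleR r x = scaleC (complex_of_real r) x" by (simp add: scaleR_conv_of_real)
  show "cinner x y = cnj (cinner y x)" by simp
  show "cinner x (y + z) = cinner x y + cinner x z" by (simp add: algebra_simps)
  show "cinner x (scaleC a y) = a * cinner x y" by simp
  show "0 \<le> Re (cinner x x)" by simp
  show "cinner x x = 0 \<longleftrightarrow> x = 0" by simp
  have "cinner x x = of_real ((cmod x)\<^sup>2)"
    by (simp add: complex_norm_square[symmetric] mult.commute)
  then show "norm x = sqrt (Re (cinner x x))"
    by simp
qed

end

instance complex :: chilbert_space ..

lemma clinear_imp_linear: "clinear f \<Longrightarrow> linear f"
  unfolding clinear_def by (simp add: linearI scaleR_scaleC)

lemma clinear_id: "clinear id"
  unfolding clinear_def by simp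

lemma clinear_scaleC: "clinear f \<Longrightarrow> f (scaleC c x) = scaleC c (f x)"
  unfolding clinear_def by blast

lemma bounded_clinear_imp_bounded_linear:
  assumes "bounded_clinear f"
  shows "bounded_linear f"
proof -
  obtain K where "linear f" "\<And>x. norm (f x) \<le> norm x * K"
    using assms clinear_imp_linear unfolding bounded_clinear_def by blast
  then show ?thesis
    by (intro bounded_linear_intro[of f K]) (simp_all add: linear_add linear_scale)
qed

lemma bounded_clinear_continuous_on: "bounded_clinear f \<Longrightarrow> continuous_on S f"
  by (rule linear_continuous_on[OF bounded_clinear_imp_bounded_linear])

section \<open>Orthogonal projections and the Riesz representation\<close>

definition csubspace :: "'a::complex_vector set \<Rightarrow> bool" where
  "csubspace M \<longleftrightarrow> 0 \<in> M \<and> (\<forall>x\<in>M. \<forall>y\<in>M. x + y \<in> M) \<and> (\<forall>c. \<forall>x\<in>M. scaleC c x \<in> M)"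

lemma csubspace_0: "csubspace M \<Longrightarrow> 0 \<in> M"
  and csubspace_add: "csubspace M \<Longrightarrow> x \<in> M \<Longrightarrow> y \<in> M \<Longrightarrow> x + y \<in> M"
  and csubspace_scaleC: "csubspace M \<Longrightarrow> x \<in> M \<Longrightarrow> scaleC c x \<in> M"
  unfolding csubspace_def by blast+

lemma csubspace_diff: "csubspace M \<Longrightarrow> x \<in> M \<Longrightarrow> y \<in> M \<Longrightarrow> x - y \<in> M"
  using csubspace_add[of M x "scaleC (-1) y"] csubspace_scaleC[of M y "-1"]
  by (simp add: scaleC_minus_left scaleC_one)

lemma csubspace_sum: "csubspace M \<Longrightarrow> (\<And>i. i \<in> A \<Longrightarrow> f i \<in> M) \<Longrightarrow> sum f A \<in> M"
  by (induction A rule: infinite_finite_induct) (auto simp: csubspace_0 csubspace_add)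

lemma csubspace_closure:
  fixes M :: "'a::complex_inner set"
  assumes M: "csubspace M"
  shows "csubspace (closure M)"
  unfolding csubspace_def
proof (intro conjI ballI allI)
  show "0 \<in> closure M"
    using csubspace_0[OF M] closure_subset by blast
  fix x y c
  assume x: "x \<in> closure M"
  have "(\<lambda>p. fst p + snd p) ` (M \<times> M) \<subseteq> M"
    using csubspace_add[OF M] by auto
  then have "(\<lambda>p. fst p + snd p) ` (M \<times> M) \<subseteq> closure M"
    using closure_subset by (rule order_trans)
  moreover have "continuous_on (closure (M \<times> M)) (\<lambda>p. fst p + snd p)"
    by (intro continuous_on_add continuous_on_fst continuous_on_snd continuous_on_id)
  ultimately have "(\<lambda>p. fst p + snd p) ` closure (M \<times> M) \<subseteq> closure M"
    by (intro image_closure_subset) simp_all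
  moreover assume "y \<in> closure M"
  ultimately show "x + y \<in> closure M"
    using x by (simp add: closure_Times image_subset_iff)
  have "scaleC c ` M \<subseteq> M"
    using csubspace_scaleC[OF M] by auto
  then have "scaleC c ` M \<subseteq> closure M"
    using closure_subset by (rule order_trans)
  moreover have "continuous_on (closure M) (scaleC c)"
    by (intro continuous_on_scaleC continuous_on_id)
  ultimately have "scaleC c ` closure M \<subseteq> closure M"
    by (intro image_closure_subset) simp_all
  then show "scaleC c x \<in> closure M"
    using x by blast
qed

lemma Cauchy_if_power2_dist_le:
  fixes m :: "nat \<Rightarrow> 'a::metric_space"
  assumes e: "e \<longlonglongrightarrow> 0" and le: "\<And>p q. (dist (m p) (m q))\<^sup>2 \<le> e p + e q"
  shows "Cauchy m"
proof (rule metric_CauchyI)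
  fix r :: real
  assume "0 < r"
  then have "0 < r\<^sup>2 / 2"
    by simp
  from order_tendstoD(2)[OF e this]
  have "\<exists>N. \<forall>n\<ge>N. e n < r\<^sup>2 / 2"
    by (simp only: eventually_sequentially)
  then obtain N where N: "\<And>n. n \<ge> N \<Longrightarrow> e n < r\<^sup>2 / 2"
    by blast
  have "dist (m p) (m q) < r" if "p \<ge> N" "q \<ge> N" for p q
  proof (rule power2_less_imp_less)
    show "(dist (m p) (m q))\<^sup>2 < r\<^sup>2"
      using le[of p q] N[OF that(1)] N[OF that(2)] by linarith
  qed (use \<open>0 < r\<close> in simp)
  then show "\<exists>N. \<forall>p\<ge>N. \<forall>q\<ge>N. dist (m p) (m q) < r"
    by blast
qed

lemma csubspace_minimizing_sequence_Cauchy: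
  fixes x :: "'a::complex_inner"
  assumes M: "csubspace M" and m: "\<And>n. m n \<in> M" and "0 \<le> d"
    and d_le: "\<And>y. y \<in> M \<Longrightarrow> d \<le> norm (x - y)"
    and close: "\<And>n. (norm (x - m n))\<^sup>2 \<le> d\<^sup>2 + e n" and e: "e \<longlonglongrightarrow> 0"
  shows "Cauchy m"
proof (rule Cauchy_if_power2_dist_le)
  show "(\<lambda>n. 2 * e n) \<longlonglongrightarrow> 0"
    using tendsto_mult_right_zero[OF e] .
  fix p q
  have "scaleR (1/2) (m p + m q) \<in> M"
    unfolding scaleR_scaleC using m M by (intro csubspace_scaleC csubspace_add)
  then have "2 * d \<le> norm (scaleR 2 (x - scaleR (1/2) (m p + m q)))"
    using d_le by simp
  also have "scaleR 2 (x - scaleR (1/2) (m p + m q)) = (x - m p) + (x - m q)"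
    by (simp add: algebra_simps scaleR_2)
  finally have "4 * d\<^sup>2 \<le> (norm ((x - m p) + (x - m q)))\<^sup>2"
    using \<open>0 \<le> d\<close> power_mono[of "2 * d" _ 2] by (simp add: power_mult_distrib)
  then show "(dist (m p) (m q))\<^sup>2 \<le> 2 * e p + 2 * e q"
    using parallelogram_law[of "x - m p" "x - m q"] close[of p] close[of q]
    by (simp add: dist_norm norm_minus_commute)
qed

lemma csubspace_nearest_point:
  fixes x :: "'a::chilbert_space"
  assumes M: "csubspace M" "closed M"
  shows "\<exists>m\<in>M. \<forall>y\<in>M. norm (x - m) \<le> norm (x - y)"
proof -
  define d where "d = Inf ((\<lambda>m. norm (x - m)) ` M)"
  define e where "e n = inverse (real (Suc n))" for n
  have d_le: "d \<le> norm (x - y)" if "y \<in> M" for y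
    unfolding d_def using that by (intro cInf_lower bdd_belowI[of _ 0]) auto
  have "0 \<le> d"
    unfolding d_def using csubspace_0[OF M(1)] by (intro cInf_greatest) auto
  have e: "e \<longlonglongrightarrow> 0"
    unfolding e_def by (rule LIMSEQ_inverse_real_of_nat)
  have "\<exists>m\<in>M. (norm (x - m))\<^sup>2 \<le> d\<^sup>2 + e n" for n
  proof -
    have "Inf ((\<lambda>m. norm (x - m)) ` M) < sqrt (d\<^sup>2 + e n)"
      unfolding d_def[symmetric] e_def by (simp add: real_less_rsqrt)
    then have "\<exists>r\<in>(\<lambda>m. norm (x - m)) ` M. r < sqrt (d\<^sup>2 + e n)"
      using csubspace_0[OF M(1)] by (intro cInf_lessD) auto
    then obtain m where "m \<in> M" "norm (x - m) < sqrt (d\<^sup>2 + e n)"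
      by blast
    moreover have "0 \<le> d\<^sup>2 + e n"
      unfolding e_def by simp
    ultimately show ?thesis
      by (metis less_eq_real_def norm_ge_zero power_mono real_sqrt_pow2)
  qed
  then obtain m where m: "\<And>n. m n \<in> M" and close: "\<And>n. (norm (x - m n))\<^sup>2 \<le> d\<^sup>2 + e n"
    by metis
  then obtain m0 where lim: "m \<longlonglongrightarrow> m0"
    using csubspace_minimizing_sequence_Cauchy[OF M(1) m \<open>0 \<le> d\<close> d_le close e]
      Cauchy_convergent convergent_def by blast
  have "(\<lambda>n. (norm (x - m n))\<^sup>2) \<longlonglongrightarrow> (norm (x - m0))\<^sup>2"
    by (intro tendsto_power tendsto_norm tendsto_diff tendsto_const lim)
  moreover have "(\<lambda>n. d\<^sup>2 + e n) \<longlonglongrightarrow> d\<^sup>2"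
    using tendsto_add[OF tendsto_const e, of "d\<^sup>2"] by simp
  ultimately have "(norm (x - m0))\<^sup>2 \<le> d\<^sup>2"
    using close by (intro LIMSEQ_le) auto
  then have "norm (x - m0) \<le> d"
    using \<open>0 \<le> d\<close> by (rule power2_le_imp_le)
  moreover have "m0 \<in> M"
    using M(2) m lim closed_sequentially by blast
  ultimately show ?thesis
    using d_le by force
qed

lemma nearest_point_orthogonal:
  assumes M: "csubspace M" and "m \<in> M" and nearest: "\<And>y. y \<in> M \<Longrightarrow> norm (x - m) \<le> norm (x - y)"
    and "y \<in> M"
  shows "cinner (x - m) y = 0"
proof -
  have "(cmod (cinner (x - m) y))\<^sup>2 \<le> 0 * (norm y)\<^sup>2"
  proof (rule cmod_power2_le_if_quadratic_nonneg)
    fix t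
    have "m - scaleC t y \<in> M"
      using M \<open>m \<in> M\<close> \<open>y \<in> M\<close> by (intro csubspace_diff csubspace_scaleC)
    then have "norm (x - m) \<le> norm ((x - m) + scaleC t y)"
      using nearest[of "m - scaleC t y"] by (simp add: algebra_simps)
    then have "(norm (x - m))\<^sup>2 \<le> (norm ((x - m) + scaleC t y))\<^sup>2"
      by (simp add: power_mono)
    then show "0 \<le> 0 + 2 * Re (t * cinner (x - m) y) + (cmod t)\<^sup>2 * (norm y)\<^sup>2"
      unfolding power2_norm_add_scaleC by simp
  qed simp_all
  then show ?thesis
    by simp
qed

definition proj :: "'a::complex_inner set \<Rightarrow> 'a \<Rightarrow> 'a" where
  "proj M x = (SOME m. m \<in> M \<and> (\<forall>y\<in>M. cinner (x - m) y = 0))"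

context
  fixes M :: "'a::chilbert_space set"
  assumes M: "csubspace M" "closed M"
begin

lemma proj_in: "proj M x \<in> M"
  and cinner_proj_orthogonal: "y \<in> M \<Longrightarrow> cinner (x - proj M x) y = 0"
proof -
  obtain m where "m \<in> M" "\<forall>y\<in>M. norm (x - m) \<le> norm (x - y)"
    using csubspace_nearest_point[OF M] by blast
  then have "\<exists>m. m \<in> M \<and> (\<forall>y\<in>M. cinner (x - m) y = 0)"
    using nearest_point_orthogonal[OF M(1)] by blast
  from someI_ex[OF this] show "proj M x \<in> M" "y \<in> M \<Longrightarrow> cinner (x - proj M x) y = 0"
    unfolding proj_def by blast+
qed

lemma proj_eqI:
  assumes "m \<in> M" and orth: "\<And>y. y \<in> M \<Longrightarrow> cinner (x - m) y = 0"
  shows "proj M x = m"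
proof -
  have diff: "m - proj M x \<in> M"
    using M(1) \<open>m \<in> M\<close> proj_in by (rule csubspace_diff)
  have "cinner ((x - proj M x) - (x - m)) (m - proj M x) = 0"
    using cinner_diff_left[of "x - proj M x" "x - m"] cinner_proj_orthogonal[OF diff, of x]
      orth[OF diff]
    by simp
  then have "cinner (m - proj M x) (m - proj M x) = 0"
    by simp
  then show ?thesis
    by (simp add: cinner_eq_zero_iff)
qed

lemma bounded_clinear_proj: "bounded_clinear (proj M)"
  unfolding bounded_clinear_def clinear_def
proof (intro conjI allI exI)
  fix x y :: 'a and c :: complex
  show "proj M (x + y) = proj M x + proj M y"
  proof (rule proj_eqI)
    show "proj M x + proj M y \<in> M"
      using M(1) proj_in proj_in by (rule csubspace_add)
    fix z
    assume "z \<in> M"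
    have "x + y - (proj M x + proj M y) = (x - proj M x) + (y - proj M y)"
      by (simp add: algebra_simps)
    then show "cinner (x + y - (proj M x + proj M y)) z = 0"
      using cinner_proj_orthogonal[OF \<open>z \<in> M\<close>] by (simp only: cinner_add_left) simp
  qed
  show "proj M (scaleC c x) = scaleC c (proj M x)"
  proof (rule proj_eqI)
    show "scaleC c (proj M x) \<in> M"
      using M(1) proj_in by (rule csubspace_scaleC)
    fix z
    assume "z \<in> M"
    then show "cinner (scaleC c x - scaleC c (proj M x)) z = 0"
      using cinner_proj_orthogonal by (simp add: cinner_scaleC_left flip: scaleC_diff_right)
  qed
  have "cinner (proj M x) (x - proj M x) = 0"
    using cinner_commute[of "proj M x"] cinner_proj_orthogonal[OF proj_in] by simp
  then have "(norm x)\<^sup>2 = (norm (proj M x))\<^sup>2 + (norm (x - proj M x))\<^sup>2"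
    using Pythagoras[of "proj M x" "x - proj M x"] by simp
  then have "(norm (proj M x))\<^sup>2 \<le> (norm x)\<^sup>2"
    using zero_le_power2[of "norm (x - proj M x)"] by linarith
  then show "norm (proj M x) \<le> norm x * 1"
    using power2_le_imp_le by simp
qed

lemma proj_commute:
  assumes U: "clinear U"
    and adjoint: "\<And>x y. cinner (U x) y = cinner x (U' y)"
    and invariant: "U ` M \<subseteq> M" "U' ` M \<subseteq> M"
  shows "proj M (U x) = U (proj M x)"
proof (rule proj_eqI)
  show "U (proj M x) \<in> M"
    using invariant(1) proj_in by blast
  fix z
  assume "z \<in> M"
  have "cinner (U x - U (proj M x)) z = cinner (x - proj M x) (U' z)"
    by (simp add: adjoint linear_diff[OF clinear_imp_linear[OF U], symmetric])
  also have "\<dots> = 0"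
    using invariant(2) \<open>z \<in> M\<close> by (intro cinner_proj_orthogonal) blast
  finally show "cinner (U x - U (proj M x)) z = 0" .
qed

end

lemma Riesz_representation:
  fixes f :: "'a::chilbert_space \<Rightarrow> complex"
  assumes f: "bounded_clinear f"
  shows "\<exists>z. \<forall>x. f x = cinner z x"
proof (cases "\<forall>x. f x = 0")
  case True
  then show ?thesis
    by (intro exI[of _ 0]) simp
next
  case False
  then obtain x0 where "f x0 \<noteq> 0"
    by blast
  have "clinear f"
    using f unfolding bounded_clinear_def by blast
  then have lin: "linear f" and scale: "\<And>c x. f (scaleC c x) = c * f x"
    by (simp_all add: clinear_imp_linear clinear_scaleC)
  define N where "N = {x. f x = 0}"
  have N: "csubspace N" "closed N"
    unfolding N_def csubspace_def using linear_0[OF lin] linear_add[OF lin] scale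
    by (auto intro!: closed_Collect_eq bounded_clinear_continuous_on[OF f])
  define u where "u = x0 - proj N x0"
  have fu: "f u = f x0"
    using proj_in[OF N, of x0] unfolding u_def N_def by (simp add: linear_diff[OF lin])
  then have "u \<noteq> 0"
    using \<open>f x0 \<noteq> 0\<close> linear_0[OF lin] by auto
  have "f x = cinner (scaleC (cnj (f u) / (norm u)\<^sup>2) u) x" for x
  proof -
    have "x - scaleC (f x / f u) u \<in> N"
      unfolding N_def using \<open>f x0 \<noteq> 0\<close> fu by (simp add: linear_diff[OF lin] scale)
    then have "cinner u (x - scaleC (f x / f u) u) = 0"
      using cinner_proj_orthogonal[OF N] unfolding u_def by blast
    then have "cinner u x = f x / f u * (norm u)\<^sup>2"
      by (simp add: cinner_diff_right cinner_scaleC_right cinner_self)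
    then show ?thesis
      using \<open>u \<noteq> 0\<close> \<open>f x0 \<noteq> 0\<close> fu by (simp add: cinner_scaleC_left field_simps)
  qed
  then show ?thesis
    by blast
qed

section \<open>Dense subspaces\<close>

lemma mem_closed_superset_of_dense:
  assumes "closure V = UNIV" "closed S" "V \<subseteq> S"
  shows "x \<in> S"
  using closure_minimal[OF assms(3,2)] assms(1) by blast

lemma continuous_on_eq_if_dense:
  fixes f g :: "'a::topological_space \<Rightarrow> 'b::t2_space"
  assumes "closure V = UNIV" "continuous_on UNIV f" "continuous_on UNIV g"
    and "\<And>x. x \<in> V \<Longrightarrow> f x = g x"
  shows "f x = g x"
  using mem_closed_superset_of_dense[OF assms(1) closed_Collect_eq[OF assms(2,3)]] assms(4)
  by blast

lemma additive_if_dense: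
  fixes g :: "'a::real_normed_vector \<Rightarrow> 'b::real_normed_vector"
  assumes "closure V = UNIV" and cont: "continuous_on UNIV g"
    and add: "\<And>x y. x \<in> V \<Longrightarrow> y \<in> V \<Longrightarrow> g (x + y) = g x + g y"
  shows "g (x + y) = g x + g y"
proof -
  have "(\<lambda>p. g (fst p + snd p)) (x, y) = (\<lambda>p. g (fst p) + g (snd p)) (x, y)"
  proof (rule continuous_on_eq_if_dense[of "V \<times> V"])
    show "closure (V \<times> V) = UNIV"
      using assms(1) by (simp add: closure_Times)
    show "continuous_on UNIV (\<lambda>p. g (fst p + snd p))"
      "continuous_on UNIV (\<lambda>p. g (fst p) + g (snd p))"
      by (intro continuous_on_add continuous_on_compose2[OF cont] continuous_on_fst
          continuous_on_snd continuous_on_id subset_UNIV)+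
  qed (use add in auto)
  then show ?thesis
    by simp
qed

lemma bounded_clinear_extension:
  fixes f :: "'a::complex_inner \<Rightarrow> 'b::chilbert_space"
  assumes V: "csubspace V" "closure V = UNIV" and "0 \<le> K"
    and add: "\<And>x y. x \<in> V \<Longrightarrow> y \<in> V \<Longrightarrow> f (x + y) = f x + f y"
    and scale: "\<And>c x. x \<in> V \<Longrightarrow> f (scaleC c x) = scaleC c (f x)"
    and bound: "\<And>x. x \<in> V \<Longrightarrow> norm (f x) \<le> K * norm x"
  shows "\<exists>g. bounded_clinear g \<and> (\<forall>x\<in>V. g x = f x)"
proof -
  have diff: "f (x - y) = f x - f y" if "x \<in> V" "y \<in> V" for x y
    using add[OF csubspace_diff[OF V(1) that] \<open>y \<in> V\<close>] by simp
  have "K-lipschitz_on V f"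
    using \<open>0 \<le> K\<close>
    by (intro lipschitz_onI) (simp_all add: dist_norm bound csubspace_diff[OF V(1)] diff[symmetric])
  then obtain g where lip: "K-lipschitz_on UNIV g" and g: "\<And>x. x \<in> V \<Longrightarrow> g x = f x"
    using lipschitz_extend_closure V(2) by metis
  have cont: "continuous_on UNIV g"
    using lip by (rule lipschitz_on_continuous_on)
  have "g (x + y) = g x + g y" for x y
    using V(2) cont by (rule additive_if_dense) (simp add: g add csubspace_add[OF V(1)])
  moreover have "g (scaleC c x) = scaleC c (g x)" for c x
    using continuous_on_eq_if_dense[OF V(2), of "\<lambda>x. g (scaleC c x)" "\<lambda>x. scaleC c (g x)"]
    by (simp add: g scale csubspace_scaleC[OF V(1)] continuous_on_compose2[OF cont]
        continuous_on_scaleC cont)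
  moreover have "norm (g x) \<le> norm x * K" for x
  proof -
    have "g 0 = 0"
      using g[OF csubspace_0[OF V(1)]] add[OF csubspace_0[OF V(1)] csubspace_0[OF V(1)]] by simp
    then show ?thesis
      using lipschitz_onD[OF lip, of x 0] by (simp add: dist_norm mult.commute)
  qed
  ultimately show ?thesis
    unfolding bounded_clinear_def clinear_def using g by blast
qed

lemma eq_if_cinner_eq_on_dense:
  fixes z z' :: "'a::complex_inner"
  assumes "closure V = UNIV" and "\<And>v. v \<in> V \<Longrightarrow> cinner v z = cinner v z'"
  shows "z = z'"
proof -
  have "cinner v z = cinner v z'" for v
  proof (rule continuous_on_eq_if_dense[OF assms(1), of "\<lambda>v. cinner v z" "\<lambda>v. cinner v z'"])
    show "continuous_on UNIV (\<lambda>v. cinner v z)" "continuous_on UNIV (\<lambda>v. cinner v z')"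
      by (intro continuous_on_cinner continuous_on_id continuous_on_const)+
  qed (rule assms(2))
  then have "cinner (z - z') (z - z') = 0"
    by (simp add: cinner_diff_right)
  then show ?thesis
    by (simp add: cinner_eq_zero_iff)
qed

lemma norm_le_if_cinner_bounded_on_dense:
  fixes z :: "'a::complex_inner"
  assumes "closure V = UNIV" "0 \<le> K" and bound: "\<And>v. v \<in> V \<Longrightarrow> cmod (cinner v z) \<le> K * norm v"
  shows "norm z \<le> K"
proof -
  have "closed {v. cmod (cinner v z) \<le> K * norm v}"
    by (intro closed_Collect_le continuous_on_norm continuous_on_cinner continuous_on_mult_left
        continuous_on_id continuous_on_const)
  then have "cmod (cinner z z) \<le> K * norm z"
    using mem_closed_superset_of_dense[OF assms(1)] bound by blast
  then have "norm z * norm z \<le> K * norm z"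
    by (simp add: cinner_self power2_eq_square norm_mult)
  then show ?thesis
    using \<open>0 \<le> K\<close> by (cases "z = 0") auto
qed

lemma Riesz_representation_on_dense:
  fixes f :: "'a::chilbert_space \<Rightarrow> complex"
  assumes V: "csubspace V" "closure V = UNIV" and "0 \<le> K"
    and add: "\<And>x y. x \<in> V \<Longrightarrow> y \<in> V \<Longrightarrow> f (x + y) = f x + f y"
    and scale: "\<And>c x. x \<in> V \<Longrightarrow> f (scaleC c x) = cnj c * f x"
    and bound: "\<And>x. x \<in> V \<Longrightarrow> cmod (f x) \<le> K * norm x"
  shows "\<exists>z. \<forall>x\<in>V. f x = cinner x z"
proof -
  obtain g where "bounded_clinear g" and g: "\<And>x. x \<in> V \<Longrightarrow> g x = cnj (f x)"
    using bounded_clinear_extension[OF V \<open>0 \<le> K\<close>, of "\<lambda>x. cnj (f x)"] add scale bound by auto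
  then obtain z where "\<And>x. g x = cinner z x"
    using Riesz_representation by blast
  then have "\<forall>x\<in>V. f x = cinner x z"
    using g cinner_commute by (metis complex_cnj_cnj)
  then show ?thesis ..
qed

lemma bounded_sesquilinear_form_representation:
  fixes B :: "'a::chilbert_space \<Rightarrow> 'a \<Rightarrow> complex"
  assumes V: "csubspace V" "closure V = UNIV" and "0 \<le> C"
    and add_left: "\<And>u v w. u \<in> V \<Longrightarrow> v \<in> V \<Longrightarrow> w \<in> V \<Longrightarrow> B (u + v) w = B u w + B v w"
    and scale_left: "\<And>c v w. v \<in> V \<Longrightarrow> w \<in> V \<Longrightarrow> B (scaleC c v) w = cnj c * B v w"
    and add_right: "\<And>u v w. u \<in> V \<Longrightarrow> v \<in> V \<Longrightarrow> w \<in> V \<Longrightarrow> B u (v + w) = B u v + B u w"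
    and scale_right: "\<And>c v w. v \<in> V \<Longrightarrow> w \<in> V \<Longrightarrow> B v (scaleC c w) = c * B v w"
    and bound: "\<And>v w. v \<in> V \<Longrightarrow> w \<in> V \<Longrightarrow> cmod (B v w) \<le> C * norm v * norm w"
  shows "\<exists>A. bounded_clinear A \<and> (\<forall>v\<in>V. \<forall>w\<in>V. B v w = cinner v (A w))"
proof -
  have "\<exists>z. \<forall>v\<in>V. B v w = cinner v z" if "w \<in> V" for w
  proof (rule Riesz_representation_on_dense[OF V, of "C * norm w"])
    show "cmod (B v w) \<le> C * norm w * norm v" if "v \<in> V" for v
      using bound[OF that \<open>w \<in> V\<close>] by (simp add: ac_simps)
  qed (use \<open>0 \<le> C\<close> that in \<open>simp_all add: add_left scale_left\<close>)
  then obtain A0 where A0: "\<And>v w. v \<in> V \<Longrightarrow> w \<in> V \<Longrightarrow> B v w = cinner v (A0 w)"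
    by metis
  have A0_eqI: "A0 w = z" if "w \<in> V" "\<And>v. v \<in> V \<Longrightarrow> B v w = cinner v z" for w z
    using that A0 by (intro eq_if_cinner_eq_on_dense[OF V(2)]) auto
  have "\<exists>A. bounded_clinear A \<and> (\<forall>w\<in>V. A w = A0 w)"
  proof (rule bounded_clinear_extension[OF V \<open>0 \<le> C\<close>])
    show "A0 (w + w') = A0 w + A0 w'" if "w \<in> V" "w' \<in> V" for w w'
    proof (rule A0_eqI)
      show "B v (w + w') = cinner v (A0 w + A0 w')" if "v \<in> V" for v
        using add_right[OF that \<open>w \<in> V\<close> \<open>w' \<in> V\<close>] A0[OF that \<open>w \<in> V\<close>] A0[OF that \<open>w' \<in> V\<close>]
        by (simp add: cinner_add_right)
    qed (use V(1) that in \<open>rule csubspace_add\<close>)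
    show "A0 (scaleC c w) = scaleC c (A0 w)" if "w \<in> V" for c w
    proof (rule A0_eqI)
      show "B v (scaleC c w) = cinner v (scaleC c (A0 w))" if "v \<in> V" for v
        using scale_right[OF that \<open>w \<in> V\<close>] A0[OF that \<open>w \<in> V\<close>] by (simp add: cinner_scaleC_right)
    qed (use V(1) that in \<open>rule csubspace_scaleC\<close>)
    show "norm (A0 w) \<le> C * norm w" if "w \<in> V" for w
    proof (rule norm_le_if_cinner_bounded_on_dense[OF V(2)])
      show "cmod (cinner v (A0 w)) \<le> C * norm w * norm v" if "v \<in> V" for v
        using bound[OF that \<open>w \<in> V\<close>] A0[OF that \<open>w \<in> V\<close>] by (simp add: ac_simps)
    qed (use \<open>0 \<le> C\<close> in simp)
  qed
  then show ?thesis
    using A0 by metis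
qed

lemma closed_cnonneg: "closed {z. cnonneg z}"
proof -
  have "{z. cnonneg z} = {z. Im z = 0} \<inter> {z. 0 \<le> Re z}"
    unfolding cnonneg_def by blast
  then show ?thesis
    by (simp add: closed_Int closed_Collect_eq closed_Collect_le continuous_on_Re continuous_on_Im)
qed

lemma positive_op_if_dense:
  fixes T :: "'a::complex_inner \<Rightarrow> 'a"
  assumes "closure V = UNIV" "continuous_on UNIV T" and "\<And>v. v \<in> V \<Longrightarrow> cnonneg (cinner v (T v))"
  shows "positive_op T"
proof -
  have "continuous_on UNIV (\<lambda>x. cinner x (T x))"
    by (intro continuous_on_cinner continuous_on_id assms(2))
  then have "closed ((\<lambda>x. cinner x (T x)) -` {z. cnonneg z})"
    by (intro continuous_closed_vimage[OF closed_cnonneg])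
      (simp add: continuous_on_eq_continuous_at)
  then show ?thesis
    unfolding positive_op_def using mem_closed_superset_of_dense[OF assms(1)] assms(3) by blast
qed

section \<open>Kernels and finite linear combinations\<close>

definition csupp :: "('a \<Rightarrow> complex) \<Rightarrow> 'a set" where
  "csupp a = {x. a x \<noteq> 0}"

definition finsupp_on :: "'a set \<Rightarrow> ('a \<Rightarrow> complex) \<Rightarrow> bool" where
  "finsupp_on D a \<longleftrightarrow> finite (csupp a) \<and> csupp a \<subseteq> D"

definition lincomb :: "('a \<Rightarrow> 'h::complex_vector) \<Rightarrow> ('a \<Rightarrow> complex) \<Rightarrow> 'h" where
  "lincomb u a = (\<Sum>x\<in>csupp a. scaleC (a x) (u x))"

definition kernel_form :: "('a \<Rightarrow> 'a \<Rightarrow> complex) \<Rightarrow> ('a \<Rightarrow> complex) \<Rightarrow> ('a \<Rightarrow> complex) \<Rightarrow> complex" where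
  "kernel_form \<phi> a b = (\<Sum>x\<in>csupp a. \<Sum>y\<in>csupp b. cnj (a x) * \<phi> x y * b y)"

lemma csupp_add: "csupp (\<lambda>x. a x + b x) \<subseteq> csupp a \<union> csupp b"
  unfolding csupp_def by auto

lemma csupp_scale: "csupp (\<lambda>x. c * a x) \<subseteq> csupp a"
  unfolding csupp_def by auto

lemma finite_csupp_scale: "finite (csupp a) \<Longrightarrow> finite (csupp (\<lambda>x. c * a x))"
  using csupp_scale by (rule finite_subset)

lemma finsupp_on_add: "finsupp_on D a \<Longrightarrow> finsupp_on D b \<Longrightarrow> finsupp_on D (\<lambda>x. a x + b x)"
  unfolding finsupp_on_def using csupp_add[of a b]
  by (meson finite_Un finite_subset le_sup_iff order_trans)

lemma finsupp_on_scale: "finsupp_on D a \<Longrightarrow> finsupp_on D (\<lambda>x. c * a x)"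
  unfolding finsupp_on_def using csupp_scale[of c a] by (meson finite_subset order_trans)

lemma csupp_indicator: "csupp (indicator {x}) = {x}"
  unfolding csupp_def by (auto simp: indicator_def)

lemma finsupp_on_indicator: "x \<in> D \<Longrightarrow> finsupp_on D (indicator {x})"
  unfolding finsupp_on_def csupp_indicator by simp

lemma lincomb_eq_sum:
  assumes "finite F" "csupp a \<subseteq> F"
  shows "lincomb u a = (\<Sum>x\<in>F. scaleC (a x) (u x))"
  unfolding lincomb_def using assms by (intro sum.mono_neutral_left) (auto simp: csupp_def)

lemma kernel_form_eq_sum:
  assumes "finite F" "csupp a \<subseteq> F" "csupp b \<subseteq> F"
  shows "kernel_form \<phi> a b = (\<Sum>x\<in>F. \<Sum>y\<in>F. cnj (a x) * \<phi> x y * b y)"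
  unfolding kernel_form_def using assms
  by (intro sum.mono_neutral_cong_left) (auto simp: csupp_def intro!: sum.mono_neutral_left)

lemma lincomb_add:
  assumes "finite (csupp a)" "finite (csupp b)"
  shows "lincomb u (\<lambda>x. a x + b x) = lincomb u a + lincomb u b"
  using assms csupp_add[of a b]
  by (simp add: lincomb_eq_sum[of "csupp a \<union> csupp b"] scaleC_add_left sum.distrib)

lemma lincomb_scale:
  assumes "finite (csupp a)"
  shows "lincomb u (\<lambda>x. c * a x) = scaleC c (lincomb u a)"
  using assms csupp_scale[of c a]
  by (simp add: lincomb_eq_sum[of "csupp a"] scaleC_sum_right scaleC_scaleC)

lemma kernel_form_add_left:
  assumes "finite (csupp a)" "finite (csupp a')" "finite (csupp b)"
  shows "kernel_form \<phi> (\<lambda>x. a x + a' x) b = kernel_form \<phi> a b + kernel_form \<phi> a' b"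
proof -
  define F where "F = csupp a \<union> csupp a' \<union> csupp b"
  have F: "finite F" "csupp a \<subseteq> F" "csupp a' \<subseteq> F" "csupp b \<subseteq> F" "csupp (\<lambda>x. a x + a' x) \<subseteq> F"
    using assms csupp_add[of a a'] unfolding F_def by auto
  show ?thesis
    by (simp add: kernel_form_eq_sum[OF F(1)] F distrib_right sum.distrib)
qed

lemma kernel_form_add_right:
  assumes "finite (csupp a)" "finite (csupp b)" "finite (csupp b')"
  shows "kernel_form \<phi> a (\<lambda>x. b x + b' x) = kernel_form \<phi> a b + kernel_form \<phi> a b'"
proof -
  define F where "F = csupp a \<union> csupp b \<union> csupp b'"
  have F: "finite F" "csupp a \<subseteq> F" "csupp b \<subseteq> F" "csupp b' \<subseteq> F" "csupp (\<lambda>x. b x + b' x) \<subseteq> F"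
    using assms csupp_add[of b b'] unfolding F_def by auto
  show ?thesis
    by (simp add: kernel_form_eq_sum[OF F(1)] F distrib_left sum.distrib)
qed

lemma kernel_form_scale_left:
  assumes "finite (csupp a)" "finite (csupp b)"
  shows "kernel_form \<phi> (\<lambda>x. c * a x) b = cnj c * kernel_form \<phi> a b"
proof -
  define F where "F = csupp a \<union> csupp b"
  have F: "finite F" "csupp a \<subseteq> F" "csupp b \<subseteq> F" "csupp (\<lambda>x. c * a x) \<subseteq> F"
    using assms csupp_scale[of c a] unfolding F_def by auto
  show ?thesis
    by (simp add: kernel_form_eq_sum[OF F(1)] F sum_distrib_left mult.assoc)
qed

lemma kernel_form_scale_right:
  assumes "finite (csupp a)" "finite (csupp b)"
  shows "kernel_form \<phi> a (\<lambda>x. c * b x) = c * kernel_form \<phi> a b"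
proof -
  define F where "F = csupp a \<union> csupp b"
  have F: "finite F" "csupp a \<subseteq> F" "csupp b \<subseteq> F" "csupp (\<lambda>x. c * b x) \<subseteq> F"
    using assms csupp_scale[of c b] unfolding F_def by auto
  show ?thesis
    by (simp add: kernel_form_eq_sum[OF F(1)] F sum_distrib_left ac_simps)
qed

lemma finsupp_on_diff: "finsupp_on D a \<Longrightarrow> finsupp_on D b \<Longrightarrow> finsupp_on D (\<lambda>x. a x - b x)"
  using finsupp_on_add[of D a "\<lambda>x. -1 * b x"] finsupp_on_scale[of D b "-1"] by simp

lemma lincomb_diff:
  assumes "finite (csupp a)" "finite (csupp b)"
  shows "lincomb u (\<lambda>x. a x - b x) = lincomb u a - lincomb u b"
  using lincomb_add[of a "\<lambda>x. -1 * b x" u] lincomb_scale[of b u "-1"] assms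
    finite_csupp_scale[OF assms(2), of "-1"]
  by (simp add: scaleC_minus_left scaleC_one)

lemma kernel_form_diff_left:
  assumes "finite (csupp a)" "finite (csupp a')" "finite (csupp b)"
  shows "kernel_form \<phi> (\<lambda>x. a x - a' x) b = kernel_form \<phi> a b - kernel_form \<phi> a' b"
  using kernel_form_add_left[of a "\<lambda>x. -1 * a' x" b \<phi>] kernel_form_scale_left[of a' b \<phi> "-1"]
    assms finite_csupp_scale[OF assms(2), of "-1"] by simp

lemma kernel_form_diff_right:
  assumes "finite (csupp a)" "finite (csupp b)" "finite (csupp b')"
  shows "kernel_form \<phi> a (\<lambda>x. b x - b' x) = kernel_form \<phi> a b - kernel_form \<phi> a b'"
  using kernel_form_add_right[of a b "\<lambda>x. -1 * b' x" \<phi>] kernel_form_scale_right[of a b' \<phi> "-1"]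
    assms finite_csupp_scale[OF assms(3), of "-1"] by simp

lemma kernel_form_diff_kernel:
  "kernel_form (\<lambda>x y. \<phi> x y - \<psi> x y) a b = kernel_form \<phi> a b - kernel_form \<psi> a b"
  unfolding kernel_form_def by (simp add: algebra_simps sum_subtractf)

lemma kernel_form_cong:
  assumes "\<And>x y. x \<in> csupp a \<Longrightarrow> y \<in> csupp b \<Longrightarrow> \<phi> x y = \<psi> x y"
  shows "kernel_form \<phi> a b = kernel_form \<psi> a b"
  unfolding kernel_form_def using assms by simp

lemma lincomb_indicator: "lincomb u (indicator {x}) = u x"
  unfolding lincomb_def csupp_indicator by (simp add: scaleC_one)

lemma kernel_form_indicator: "kernel_form \<phi> (indicator {x}) (indicator {y}) = \<phi> x y"
  unfolding kernel_form_def csupp_indicator by simp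

lemma cinner_lincomb:
  assumes "clinear T"
  shows "cinner (lincomb u a) (T (lincomb u b)) = kernel_form (\<lambda>x y. cinner (u x) (T (u y))) a b"
proof -
  have "cinner (lincomb u a) (T (lincomb u b))
      = (\<Sum>y\<in>csupp b. \<Sum>x\<in>csupp a. b y * (cnj (a x) * cinner (u x) (T (u y))))"
    unfolding lincomb_def
    by (simp add: linear_sum[OF clinear_imp_linear[OF assms]] clinear_scaleC[OF assms]
        cinner_sum_left cinner_sum_right cinner_scaleC_left cinner_scaleC_right sum_distrib_left)
  also have "\<dots> = (\<Sum>x\<in>csupp a. \<Sum>y\<in>csupp b. b y * (cnj (a x) * cinner (u x) (T (u y))))"
    by (rule sum.swap)
  finally show ?thesis
    unfolding kernel_form_def by (simp add: ac_simps)
qed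

lemma kernel_form_expand:
  assumes a: "finite (csupp a)" and b: "finite (csupp b)"
  shows "kernel_form \<phi> (\<lambda>x. a x + t * b x) (\<lambda>x. a x + t * b x)
      = kernel_form \<phi> a a + t * kernel_form \<phi> a b + cnj t * kernel_form \<phi> b a
        + cnj t * t * kernel_form \<phi> b b"
proof -
  have tb: "finite (csupp (\<lambda>x. t * b x))"
    using b by (rule finite_csupp_scale)
  have atb: "finite (csupp (\<lambda>x. a x + t * b x))"
    using csupp_add[of a "\<lambda>x. t * b x"] a tb by (meson finite_Un finite_subset)
  show ?thesis
    by (simp add: kernel_form_add_left[OF a tb atb] kernel_form_add_right[OF a a tb]
        kernel_form_add_right[OF tb a tb] kernel_form_scale_left[OF b]
        kernel_form_scale_right[OF _ b]
        a b tb algebra_simps)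
qed

lemma psd_on_kernel_form_nonneg:
  assumes psd: "psd_on D \<phi>" and a: "finsupp_on D a"
  shows "cnonneg (kernel_form \<phi> a a)"
proof -
  define F where "F = csupp a"
  have F: "finite F" "F \<subseteq> D"
    using a unfolding finsupp_on_def F_def by auto
  obtain h where h: "bij_betw h {0..<card F} F"
    using ex_bij_betw_nat_finite[OF F(1)] by blast
  have inner: "(\<Sum>j<card F. cnj (a (h i)) * \<phi> (h i) (h j) * a (h j))
      = (\<Sum>y\<in>F. cnj (a (h i)) * \<phi> (h i) y * a y)" for i
    unfolding lessThan_atLeast0 by (rule sum.reindex_bij_betw[OF h])
  have "\<forall>i<card F. h i \<in> D"
    using bij_betwE[OF h] F(2) by auto
  then have "cnonneg (\<Sum>i<card F. \<Sum>j<card F. cnj (a (h i)) * \<phi> (h i) (h j) * a (h j))"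
    using psd[unfolded psd_on_def, rule_format, of "card F" h "\<lambda>i. a (h i)"] by simp
  also have "(\<Sum>i<card F. \<Sum>j<card F. cnj (a (h i)) * \<phi> (h i) (h j) * a (h j))
      = (\<Sum>x\<in>F. \<Sum>y\<in>F. cnj (a x) * \<phi> x y * a y)"
    unfolding inner unfolding lessThan_atLeast0 by (rule sum.reindex_bij_betw[OF h])
  finally show ?thesis
    unfolding kernel_form_def F_def .
qed

lemma psd_on_kernel_form_hermitian:
  assumes psd: "psd_on D \<phi>" and a: "finsupp_on D a" and b: "finsupp_on D b"
  shows "kernel_form \<phi> b a = cnj (kernel_form \<phi> a b)"
proof -
  have expand: "kernel_form \<phi> (\<lambda>x. a x + t * b x) (\<lambda>x. a x + t * b x)
      = kernel_form \<phi> a a + t * kernel_form \<phi> a b + cnj t * kernel_form \<phi> b a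
        + cnj t * t * kernel_form \<phi> b b" for t
    by (rule kernel_form_expand) (use a b in \<open>simp_all add: finsupp_on_def\<close>)
  have nonneg: "Im (kernel_form \<phi> (\<lambda>x. a x + t * b x) (\<lambda>x. a x + t * b x)) = 0"
    "Im (kernel_form \<phi> a a) = 0" "Im (kernel_form \<phi> b b) = 0" for t
    using psd_on_kernel_form_nonneg[OF psd] a b finsupp_on_add[OF a finsupp_on_scale[OF b]]
    unfolding cnonneg_def by blast+
  have "Im (kernel_form \<phi> b a) = - Im (kernel_form \<phi> a b)"
    using nonneg(1)[of 1] nonneg(2,3) unfolding expand by simp
  moreover have "Re (kernel_form \<phi> b a) = Re (kernel_form \<phi> a b)"
    using nonneg(1)[of \<i>] nonneg(2,3) unfolding expand by simp
  ultimately show ?thesis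
    by (simp add: complex_eq_iff)
qed

lemma psd_on_kernel_form_Cauchy_Schwarz:
  assumes psd: "psd_on D \<phi>" and a: "finsupp_on D a" and b: "finsupp_on D b"
  shows "(cmod (kernel_form \<phi> a b))\<^sup>2 \<le> Re (kernel_form \<phi> a a) * Re (kernel_form \<phi> b b)"
proof (rule cmod_power2_le_if_quadratic_nonneg)
  fix t
  have "cnj t * t = of_real ((cmod t)\<^sup>2)"
    by (metis complex_norm_square mult.commute)
  then have "Re (kernel_form \<phi> (\<lambda>x. a x + t * b x) (\<lambda>x. a x + t * b x))
      = Re (kernel_form \<phi> a a) + 2 * Re (t * kernel_form \<phi> a b)
        + (cmod t)\<^sup>2 * Re (kernel_form \<phi> b b)"
    using a b unfolding finsupp_on_def
    by (simp add: kernel_form_expand psd_on_kernel_form_hermitian[OF psd a b])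
  moreover have "cnonneg (kernel_form \<phi> (\<lambda>x. a x + t * b x) (\<lambda>x. a x + t * b x))"
    using psd a b by (intro psd_on_kernel_form_nonneg finsupp_on_add finsupp_on_scale)
  ultimately show "0 \<le> Re (kernel_form \<phi> a a) + 2 * Re (t * kernel_form \<phi> a b)
      + (cmod t)\<^sup>2 * Re (kernel_form \<phi> b b)"
    unfolding cnonneg_def by simp
qed (use psd_on_kernel_form_nonneg[OF psd] a b in \<open>simp_all add: cnonneg_def\<close>)

section \<open>Kernels dominated by a Gram kernel\<close>

definition lincomb_span :: "('a \<Rightarrow> 'h::complex_vector) \<Rightarrow> 'a set \<Rightarrow> 'h set" where
  "lincomb_span u D = {lincomb u a | a. finsupp_on D a}"

lemma lincomb_spanI: "finsupp_on D a \<Longrightarrow> lincomb u a \<in> lincomb_span u D"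
  unfolding lincomb_span_def by blast

lemma lincomb_spanE:
  assumes "v \<in> lincomb_span u D"
  obtains a where "finsupp_on D a" "v = lincomb u a"
  using assms unfolding lincomb_span_def by blast

lemma mem_lincomb_span: "x \<in> D \<Longrightarrow> u x \<in> lincomb_span u D"
  using lincomb_spanI[OF finsupp_on_indicator] lincomb_indicator by metis

lemma csubspace_lincomb_span: "csubspace (lincomb_span u D)"
  unfolding csubspace_def
proof (intro conjI ballI allI)
  show "0 \<in> lincomb_span u D"
    using lincomb_spanI[of D "\<lambda>_. 0" u] by (simp add: finsupp_on_def csupp_def lincomb_def)
  fix v w c
  assume "v \<in> lincomb_span u D"
  then obtain a where a: "finsupp_on D a" "v = lincomb u a"
    by (rule lincomb_spanE)
  then show "scaleC c v \<in> lincomb_span u D"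
    using lincomb_scale[of a u c] finsupp_on_scale lincomb_spanI unfolding finsupp_on_def by metis
  assume "w \<in> lincomb_span u D"
  then obtain b where b: "finsupp_on D b" "w = lincomb u b"
    by (rule lincomb_spanE)
  show "v + w \<in> lincomb_span u D"
    using a b lincomb_add[of a b u] finsupp_on_add lincomb_spanI unfolding finsupp_on_def by metis
qed

text \<open>The coefficients chosen by SOME are irrelevant: see \<open>span_form_lincomb\<close>.\<close>

definition span_form ::
    "('a \<Rightarrow> 'h::complex_vector) \<Rightarrow> 'a set \<Rightarrow> ('a \<Rightarrow> 'a \<Rightarrow> complex) \<Rightarrow> 'h \<Rightarrow> 'h \<Rightarrow> complex" where
  "span_form u D \<phi> v w =
     kernel_form \<phi> (SOME a. finsupp_on D a \<and> lincomb u a = v)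
       (SOME b. finsupp_on D b \<and> lincomb u b = w)"

locale dominated_kernel =
  fixes u :: "'a \<Rightarrow> 'h::chilbert_space" and D :: "'a set" and \<phi> :: "'a \<Rightarrow> 'a \<Rightarrow> complex"
  assumes psd: "psd_on D \<phi>"
    and psd_gram_minus: "psd_on D (\<lambda>x y. cinner (u x) (u y) - \<phi> x y)"
begin

lemma Re_kernel_form_le:
  assumes "finsupp_on D a"
  shows "Re (kernel_form \<phi> a a) \<le> (norm (lincomb u a))\<^sup>2"
proof -
  have "kernel_form (\<lambda>x y. cinner (u x) (u y)) a a = cinner (lincomb u a) (lincomb u a)"
    using cinner_lincomb[OF clinear_id, of u a a] by simp
  then show ?thesis
    using psd_on_kernel_form_nonneg[OF psd_gram_minus assms]
    by (simp add: kernel_form_diff_kernel Re_cinner_self cnonneg_def)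
qed

lemma cmod_kernel_form_le:
  assumes a: "finsupp_on D a" and b: "finsupp_on D b"
  shows "cmod (kernel_form \<phi> a b) \<le> norm (lincomb u a) * norm (lincomb u b)"
proof -
  have "(cmod (kernel_form \<phi> a b))\<^sup>2 \<le> Re (kernel_form \<phi> a a) * Re (kernel_form \<phi> b b)"
    by (rule psd_on_kernel_form_Cauchy_Schwarz[OF psd a b])
  also have "\<dots> \<le> (norm (lincomb u a))\<^sup>2 * (norm (lincomb u b))\<^sup>2"
    using psd_on_kernel_form_nonneg[OF psd b] unfolding cnonneg_def
    by (intro mult_mono Re_kernel_form_le a b) simp_all
  also have "\<dots> = (norm (lincomb u a) * norm (lincomb u b))\<^sup>2"
    by (simp add: power_mult_distrib)
  finally show ?thesis
    by (rule power2_le_imp_le) simp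
qed

lemma kernel_form_eq_if_lincomb_eq:
  assumes a: "finsupp_on D a" "finsupp_on D a'" and b: "finsupp_on D b" "finsupp_on D b'"
    and "lincomb u a = lincomb u a'" "lincomb u b = lincomb u b'"
  shows "kernel_form \<phi> a b = kernel_form \<phi> a' b'"
proof -
  have fin: "finite (csupp a)" "finite (csupp a')" "finite (csupp b)" "finite (csupp b')"
    using a b unfolding finsupp_on_def by blast+
  have "cmod (kernel_form \<phi> (\<lambda>x. a x - a' x) b)
      \<le> norm (lincomb u (\<lambda>x. a x - a' x)) * norm (lincomb u b)"
    using a b by (intro cmod_kernel_form_le finsupp_on_diff)
  moreover have "cmod (kernel_form \<phi> a' (\<lambda>x. b x - b' x))
      \<le> norm (lincomb u a') * norm (lincomb u (\<lambda>x. b x - b' x))"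
    using a b by (intro cmod_kernel_form_le finsupp_on_diff)
  ultimately show ?thesis
    using assms(5,6) fin by (simp add: lincomb_diff kernel_form_diff_left kernel_form_diff_right)
qed

lemma span_form_lincomb:
  assumes a: "finsupp_on D a" and b: "finsupp_on D b"
  shows "span_form u D \<phi> (lincomb u a) (lincomb u b) = kernel_form \<phi> a b"
proof -
  have "\<exists>a'. finsupp_on D a' \<and> lincomb u a' = lincomb u a"
    "\<exists>b'. finsupp_on D b' \<and> lincomb u b' = lincomb u b"
    using a b by blast+
  from this[THEN someI_ex] show ?thesis
    unfolding span_form_def using a b by (intro kernel_form_eq_if_lincomb_eq) auto
qed

lemma kernel_form_representation:
  assumes dense: "closure (lincomb_span u D) = UNIV"
  shows "\<exists>A. bounded_clinear A \<and>
    (\<forall>a b. finsupp_on D a \<longrightarrow> finsupp_on D b \<longrightarrow>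
      kernel_form \<phi> a b = cinner (lincomb u a) (A (lincomb u b)))"
proof -
  let ?B = "span_form u D \<phi>" and ?V = "lincomb_span u D"
  have fin: "finite (csupp a)" if "finsupp_on D a" for a
    using that unfolding finsupp_on_def by blast
  have "\<exists>A. bounded_clinear A \<and> (\<forall>v\<in>?V. \<forall>w\<in>?V. ?B v w = cinner v (A w))"
  proof (rule bounded_sesquilinear_form_representation[OF csubspace_lincomb_span dense, of 1])
    fix v v' w c
    assume "v \<in> ?V" "v' \<in> ?V" "w \<in> ?V"
    then obtain a a' b where a: "finsupp_on D a" "finsupp_on D a'" and b: "finsupp_on D b"
      and v: "v = lincomb u a" "v' = lincomb u a'" "w = lincomb u b"
      by (metis lincomb_spanE)
    show "?B (v + v') w = ?B v w + ?B v' w"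
      using a b fin
      by (simp add: v span_form_lincomb finsupp_on_add kernel_form_add_left flip: lincomb_add)
    show "?B v (v' + w) = ?B v v' + ?B v w"
      using a b fin
      by (simp add: v span_form_lincomb finsupp_on_add kernel_form_add_right flip: lincomb_add)
    show "?B (scaleC c v) w = cnj c * ?B v w"
      using a b fin
      by (simp add: v span_form_lincomb finsupp_on_scale kernel_form_scale_left flip: lincomb_scale)
    show "?B v (scaleC c w) = c * ?B v w"
      using a b fin
      by (simp add: v span_form_lincomb finsupp_on_scale kernel_form_scale_right
          flip: lincomb_scale)
    show "cmod (?B v w) \<le> 1 * norm v * norm w"
      using a b by (simp add: v span_form_lincomb cmod_kernel_form_le)
  qed simp
  then show ?thesis
    using span_form_lincomb lincomb_spanI by metis
qed

theorem operator_exists: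
  assumes dense: "closure (lincomb_span u D) = UNIV"
  shows "\<exists>A. bounded_clinear A \<and> positive_op A \<and> positive_op (\<lambda>x. x - A x) \<and>
    (\<forall>x\<in>D. \<forall>y\<in>D. \<phi> x y = cinner (u x) (A (u y)))"
proof -
  obtain A where A: "bounded_clinear A"
    and rep: "\<And>a b. finsupp_on D a \<Longrightarrow> finsupp_on D b \<Longrightarrow>
      kernel_form \<phi> a b = cinner (lincomb u a) (A (lincomb u b))"
    using kernel_form_representation[OF dense] by blast
  have cont: "continuous_on UNIV A"
    using A by (rule bounded_clinear_continuous_on)
  have "positive_op A"
  proof (rule positive_op_if_dense[OF dense cont])
    fix v
    assume "v \<in> lincomb_span u D"
    then obtain a where "finsupp_on D a" "v = lincomb u a"
      by (rule lincomb_spanE)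
    then show "cnonneg (cinner v (A v))"
      using psd_on_kernel_form_nonneg[OF psd] rep by metis
  qed
  moreover have "positive_op (\<lambda>x. x - A x)"
  proof (rule positive_op_if_dense[OF dense])
    show "continuous_on UNIV (\<lambda>x. x - A x)"
      by (intro continuous_on_diff continuous_on_id cont)
    fix v
    assume "v \<in> lincomb_span u D"
    then obtain a where a: "finsupp_on D a" "v = lincomb u a"
      by (rule lincomb_spanE)
    then have "cinner v (v - A v) = kernel_form (\<lambda>x y. cinner (u x) (u y) - \<phi> x y) a a"
      using cinner_lincomb[OF clinear_id, of u a a] rep[OF a(1) a(1)]
      by (simp add: cinner_diff_right kernel_form_diff_kernel)
    then show "cnonneg (cinner v (v - A v))"
      using psd_on_kernel_form_nonneg[OF psd_gram_minus a(1)] by simp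
  qed
  moreover have "\<phi> x y = cinner (u x) (A (u y))" if "x \<in> D" "y \<in> D" for x y
    using rep[OF finsupp_on_indicator finsupp_on_indicator, OF that]
    by (simp add: kernel_form_indicator lincomb_indicator)
  ultimately show ?thesis
    using A by blast
qed

end

lemma operator_eq_if_dense_span:
  fixes u :: "'a \<Rightarrow> 'h::chilbert_space"
  assumes dense: "closure (lincomb_span u D) = UNIV"
    and A: "bounded_clinear A" and A': "bounded_clinear A'"
    and eq: "\<And>x y. x \<in> D \<Longrightarrow> y \<in> D \<Longrightarrow> cinner (u x) (A (u y)) = cinner (u x) (A' (u y))"
  shows "A = A'"
proof -
  have on_span: "A w = A' w" if "w \<in> lincomb_span u D" for w
  proof (rule eq_if_cinner_eq_on_dense[OF dense])
    fix v
    assume "v \<in> lincomb_span u D"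
    then obtain a b where a: "finsupp_on D a" "v = lincomb u a"
      and b: "finsupp_on D b" "w = lincomb u b"
      using \<open>w \<in> lincomb_span u D\<close> by (metis lincomb_spanE)
    have "kernel_form (\<lambda>x y. cinner (u x) (A (u y))) a b
        = kernel_form (\<lambda>x y. cinner (u x) (A' (u y))) a b"
      using a(1) b(1) eq unfolding finsupp_on_def by (intro kernel_form_cong) blast
    then show "cinner v (A w) = cinner v (A' w)"
      using A A' unfolding a(2) b(2) bounded_clinear_def by (simp add: cinner_lincomb)
  qed
  have "A w = A' w" for w
    by (rule continuous_on_eq_if_dense[OF dense, of A A'])
      (simp_all add: A A' bounded_clinear_continuous_on on_span)
  then show ?thesis
    by blast
qed

section \<open>Representations of CCR(S)\<close>

lemma skew_symmetric_quadratic_form_zero: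
  fixes S :: "real^'n^'n"
  assumes "transpose S = - S"
  shows "\<xi> \<bullet> (S *v \<xi>) = 0"
proof -
  have "\<xi> \<bullet> (S *v \<xi>) = (transpose S *v \<xi>) \<bullet> \<xi>"
    by (simp add: dot_lmul_matrix)
  also have "\<dots> = - (\<xi> \<bullet> (S *v \<xi>))"
    by (simp add: assms matrix_vector_mult_diff_rdistrib[of 0 S \<xi>, simplified] inner_commute)
  finally show ?thesis
    by simp
qed

lemma invariant_subspace_eq_UNIV_if_cyclic:
  fixes \<T> :: "('h::chilbert_space \<Rightarrow> 'h) set"
  assumes K: "csubspace K" "closed K" "\<psi> \<in> K"
    and invariant: "\<And>T. T \<in> \<T> \<Longrightarrow> clinear T \<and> T ` K \<subseteq> K"
    and adjoint: "\<And>T. T \<in> \<T> \<Longrightarrow> \<exists>T'\<in>\<T>. \<forall>x y. cinner (T x) y = cinner x (T' y)"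
    and cyclic: "cyclic_vec (commutant (commutant \<T>)) \<psi>"
  shows "K = UNIV"
proof -
  have "proj K \<circ> T = T \<circ> proj K" if T: "T \<in> \<T>" for T
  proof -
    obtain T' where T': "T' \<in> \<T>" and adj: "\<And>x y. cinner (T x) y = cinner x (T' y)"
      using adjoint[OF T] by blast
    have "proj K (T x) = T (proj K x)" for x
      using invariant[OF T] invariant[OF T'] by (intro proj_commute[OF K(1,2) _ adj]) auto
    then show ?thesis
      by (simp add: fun_eq_iff)
  qed
  then have proj: "proj K \<in> commutant \<T>"
    unfolding commutant_def using bounded_clinear_proj[OF K(1,2)] by auto
  have "proj K \<psi> = \<psi>"
    by (rule proj_eqI[OF K]) simp
  have "B \<psi> \<in> K" if B: "B \<in> commutant (commutant \<T>)" for B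
  proof -
    have "B \<circ> proj K = proj K \<circ> B"
      using B proj unfolding commutant_def by blast
    then have "B (proj K \<psi>) = proj K (B \<psi>)"
      by (simp add: fun_eq_iff)
    then show ?thesis
      using \<open>proj K \<psi> = \<psi>\<close> proj_in[OF K(1,2), of "B \<psi>"] by simp
  qed
  then have "closure {B \<psi> | B. B \<in> commutant (commutant \<T>)} \<subseteq> K"
    using K(2) by (intro closure_minimal) auto
  then show ?thesis
    using cyclic unfolding cyclic_vec_def by blast
qed

locale ccr_representation =
  fixes S :: "real^'d^'d" and W :: "real^'d \<Rightarrow> 'h::chilbert_space \<Rightarrow> 'h"
  assumes skew: "transpose S = - S" and rep: "ccr_rep S W"
begin

lemma bounded_clinear_W: "bounded_clinear (W \<xi>)"
  and cinner_W_W: "cinner (W \<xi> x) (W \<xi> y) = cinner x y"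
  and surj_W: "surj (W \<xi>)"
  and continuous_on_W: "continuous_on UNIV (\<lambda>\<xi>. W \<xi> x)"
  using rep unfolding ccr_rep_def unitary_op_def by auto

lemma W_W: "W \<xi> (W \<eta> x) = scaleC (exp (\<i> * complex_of_real (\<xi> \<bullet> (S *v \<eta>)))) (W (\<xi> + \<eta>) x)"
  using rep unfolding ccr_rep_def by (metis comp_apply)

lemma W_zero: "W 0 x = x"
proof -
  obtain y where "x = W 0 y"
    using surj_W[of 0] by (metis surjD)
  then show ?thesis
    using W_W[of 0 0 y] by (simp add: scaleC_one)
qed

lemma W_W_uminus: "W \<xi> (W (- \<xi>) x) = x"
  using W_W[of \<xi> "- \<xi>" x] skew_symmetric_quadratic_form_zero[OF skew, of \<xi>]
  by (simp add: matrix_vector_mult_diff_distrib[of S 0 \<xi>, simplified] scaleC_one W_zero)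

lemma cinner_W_adjoint: "cinner (W \<xi> x) y = cinner x (W (- \<xi>) y)"
  by (metis cinner_W_W W_W_uminus)

lemma W_in_closure_lincomb_span:
  assumes "closure D = UNIV"
  shows "W \<eta> \<psi> \<in> closure (lincomb_span (\<lambda>\<eta>. W \<eta> \<psi>) D)"
proof -
  have "(\<lambda>\<eta>. W \<eta> \<psi>) ` D \<subseteq> lincomb_span (\<lambda>\<eta>. W \<eta> \<psi>) D"
    by (rule image_subsetI) (rule mem_lincomb_span)
  then have "(\<lambda>\<eta>. W \<eta> \<psi>) ` D \<subseteq> closure (lincomb_span (\<lambda>\<eta>. W \<eta> \<psi>) D)"
    using closure_subset by (rule order_trans)
  then have "(\<lambda>\<eta>. W \<eta> \<psi>) ` closure D \<subseteq> closure (lincomb_span (\<lambda>\<eta>. W \<eta> \<psi>) D)"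
    using continuous_on_W assms by (intro image_closure_subset) simp_all
  then show ?thesis
    using assms by blast
qed

lemma W_closure_lincomb_span:
  assumes "closure D = UNIV"
  shows "W \<xi> ` closure (lincomb_span (\<lambda>\<eta>. W \<eta> \<psi>) D) \<subseteq> closure (lincomb_span (\<lambda>\<eta>. W \<eta> \<psi>) D)"
proof (intro image_closure_subset bounded_clinear_continuous_on[OF bounded_clinear_W]
    closed_closure subsetI)
  let ?K = "closure (lincomb_span (\<lambda>\<eta>. W \<eta> \<psi>) D)"
  fix y
  assume "y \<in> W \<xi> ` lincomb_span (\<lambda>\<eta>. W \<eta> \<psi>) D"
  then obtain a where y: "y = W \<xi> (lincomb (\<lambda>\<eta>. W \<eta> \<psi>) a)"
    by (auto elim: lincomb_spanE)
  have l: "clinear (W \<xi>)"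
    using bounded_clinear_W unfolding bounded_clinear_def by blast
  have "y = (\<Sum>\<eta>\<in>csupp a.
      scaleC (a \<eta>) (scaleC (exp (\<i> * complex_of_real (\<xi> \<bullet> (S *v \<eta>)))) (W (\<xi> + \<eta>) \<psi>)))"
    unfolding y lincomb_def
    by (simp add: linear_sum[OF clinear_imp_linear[OF l]] clinear_scaleC[OF l] W_W)
  also have "\<dots> \<in> ?K"
    using csubspace_closure[OF csubspace_lincomb_span] W_in_closure_lincomb_span[OF assms]
    by (intro csubspace_sum csubspace_scaleC)
  finally show "y \<in> ?K" .
qed

lemma closure_lincomb_span_eq_UNIV_if_cyclic:
  assumes "closure D = UNIV" and "cyclic_vec (CCR_alg W) \<psi>"
  shows "closure (lincomb_span (\<lambda>\<eta>. W \<eta> \<psi>) D) = UNIV"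
proof (rule invariant_subspace_eq_UNIV_if_cyclic)
  show "csubspace (closure (lincomb_span (\<lambda>\<eta>. W \<eta> \<psi>) D))"
    by (rule csubspace_closure[OF csubspace_lincomb_span])
  show "\<psi> \<in> closure (lincomb_span (\<lambda>\<eta>. W \<eta> \<psi>) D)"
    using W_in_closure_lincomb_span[OF assms(1), of 0] by (simp add: W_zero)
  show "clinear T \<and> T ` closure (lincomb_span (\<lambda>\<eta>. W \<eta> \<psi>) D) \<subseteq> closure (lincomb_span (\<lambda>\<eta>. W \<eta> \<psi>) D)"
    if "T \<in> range W" for T
    using that bounded_clinear_W W_closure_lincomb_span[OF assms(1)] unfolding bounded_clinear_def
    by blast
  show "\<exists>T'\<in>range W. \<forall>x y. cinner (T x) y = cinner x (T' y)" if "T \<in> range W" for T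
    using that cinner_W_adjoint by blast
  show "cyclic_vec (commutant (commutant (range W))) \<psi>"
    using assms(2) unfolding CCR_alg_def .
qed simp

lemma continuous_on_phi_op:
  assumes "bounded_clinear A"
  shows "continuous_on UNIV (\<lambda>(\<xi>, \<eta>). phi_op W \<psi> A \<xi> \<eta>)"
  unfolding phi_op_def case_prod_unfold
  by (intro continuous_on_cinner continuous_on_compose2[OF continuous_on_W]
      continuous_on_compose2[OF bounded_clinear_continuous_on[OF assms]]
      continuous_on_fst continuous_on_snd continuous_on_id) auto

end

theorem lemma2:
  fixes S :: "real^'d^'d"
    and W :: "real^'d \<Rightarrow> 'h::chilbert_space \<Rightarrow> 'h"
    and \<psi> :: 'h
    and D :: "(real^'d) set"
    and \<phi> :: "real^'d \<Rightarrow> real^'d \<Rightarrow> complex"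
  assumes "transpose S = - S"
    and "ccr_rep S W"
    and "cyclic_vec (CCR_alg W) \<psi>"
    and "norm \<psi> = 1"
    and "closure D = UNIV"
    and "psd_on D \<phi>"
    and "psd_on D (\<lambda>\<xi> \<eta>. phi_op W \<psi> id \<xi> \<eta> - \<phi> \<xi> \<eta>)"
  shows "(\<exists>!A. bounded_clinear A \<and> positive_op A \<and> positive_op (\<lambda>x. x - A x) \<and>
              (\<forall>\<xi>\<in>D. \<forall>\<eta>\<in>D. \<phi> \<xi> \<eta> = phi_op W \<psi> A \<xi> \<eta>))
       \<and> (\<exists>\<Phi>. continuous_on UNIV (\<lambda>(\<xi>, \<eta>). \<Phi> \<xi> \<eta>) \<and>
              (\<forall>\<xi>\<in>D. \<forall>\<eta>\<in>D. \<Phi> \<xi> \<eta> = \<phi> \<xi> \<eta>))"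
proof -
  interpret ccr_representation S W
    using assms(1,2) by unfold_locales
  have "phi_op W \<psi> id = (\<lambda>\<xi> \<eta>. cinner (W \<xi> \<psi>) (W \<eta> \<psi>))"
    by (simp add: phi_op_def fun_eq_iff)
  then interpret dominated_kernel "\<lambda>\<xi>. W \<xi> \<psi>" D \<phi>
    using assms(6,7) by unfold_locales simp_all
  have dense: "closure (lincomb_span (\<lambda>\<xi>. W \<xi> \<psi>) D) = UNIV"
    using assms(5,3) by (rule closure_lincomb_span_eq_UNIV_if_cyclic)
  obtain A where A: "bounded_clinear A" "positive_op A" "positive_op (\<lambda>x. x - A x)"
    and \<phi>_A: "\<forall>\<xi>\<in>D. \<forall>\<eta>\<in>D. \<phi> \<xi> \<eta> = phi_op W \<psi> A \<xi> \<eta>"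
    using operator_exists[OF dense] unfolding phi_op_def by blast
  have "A' = A" if "bounded_clinear A'" "\<forall>\<xi>\<in>D. \<forall>\<eta>\<in>D. \<phi> \<xi> \<eta> = phi_op W \<psi> A' \<xi> \<eta>" for A'
    using operator_eq_if_dense_span[OF dense that(1) A(1)] that(2) \<phi>_A unfolding phi_op_def by simp
  then have "\<exists>!A. bounded_clinear A \<and> positive_op A \<and> positive_op (\<lambda>x. x - A x) \<and>
      (\<forall>\<xi>\<in>D. \<forall>\<eta>\<in>D. \<phi> \<xi> \<eta> = phi_op W \<psi> A \<xi> \<eta>)"
    using A \<phi>_A by blast
  moreover have "continuous_on UNIV (\<lambda>(\<xi>, \<eta>). phi_op W \<psi> A \<xi> \<eta>)"
    using A(1) by (rule continuous_on_phi_op)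
  ultimately show ?thesis
    using \<phi>_A by auto
qed

end
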